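(* Let $X,Y$ be real normed linear spaces, $m\ge1$, $n\ge 2$ integers, and $L:X^m\to Y$ a continuous symmetric $m$-linear mapping with $\widehat L\ne 0$. Then \[\left(\frac{\|L\|_{(n)}}{\|\widehat{L}\|}\right)^{1/m}\le \sqrt{n}.\] Moreover, for $n=2$ and $m$ odd, the inequality $\left(\|L\|_{(2)}/\|\widehat{L}\|\right)^{1/m}<\sqrt2$ is strict.
   Context: For real normed spaces $X,Y$, a continuous symmetric $m$-linear map $L:X^m\to Y$ has associated $m$-homogeneous polynomial $\widehat{L}(x)=L(x,\ldots,x)$, with $\|\widehat{L}\|=\sup\{\|\widehat{L}(x)\|:\|x\|\le 1\}$. The notation $L(x_1^{k_1}\cdots x_n^{k_n})$ means $L$ evaluated at the $m$-tuple in which each $x_i$ appears $k_i$ times ($k_1+\cdots+k_n=m$, $k_i\ge 0$ integers). Define \[\|L\|_{(n)}=\sup_{k_1+\cdots+k_n=m}\ \sup\{\|L(x_1^{k_1}\cdots x_n^{k_n})\|:\|x_1\|\le 1,\ldots,\|x_n\|\le 1\}.\] *)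

theory Defs
  imports "HOL-Analysis.Analysis"
begin

text \<open>An m-linear map X^m -> Y is represented as a function on tuples
  (nat => 'a), of which only the entries with index < m matter.\<close>

definition mlinear :: "nat \<Rightarrow> ((nat \<Rightarrow> 'a::real_normed_vector) \<Rightarrow> 'b::real_normed_vector) \<Rightarrow> bool" where
  "mlinear m L \<longleftrightarrow>
     (\<forall>x y. (\<forall>i<m. x i = y i) \<longrightarrow> L x = L y) \<and>
     (\<forall>x i a b. i < m \<longrightarrow> L (x(i := a + b)) = L (x(i := a)) + L (x(i := b))) \<and>
     (\<forall>x i c a. i < m \<longrightarrow> L (x(i := c *\<^sub>R a)) = c *\<^sub>R L (x(i := a)))"

definition msymmetric :: "nat \<Rightarrow> ((nat \<Rightarrow> 'a) \<Rightarrow> 'b) \<Rightarrow> bool" where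
  "msymmetric m L \<longleftrightarrow> (\<forall>\<sigma> x. \<sigma> permutes {..<m} \<longrightarrow> L (x \<circ> \<sigma>) = L x)"

text \<open>Continuity on X^m (product topology), stated sequentially (X^m is metrizable).\<close>
definition mcontinuous :: "nat \<Rightarrow> ((nat \<Rightarrow> 'a::real_normed_vector) \<Rightarrow> 'b::real_normed_vector) \<Rightarrow> bool" where
  "mcontinuous m L \<longleftrightarrow>
     (\<forall>s x. (\<forall>i<m. (\<lambda>k. s k i) \<longlonglongrightarrow> x i) \<longrightarrow> (\<lambda>k. L (s k)) \<longlonglongrightarrow> L x)"

definition hatp :: "((nat \<Rightarrow> 'a) \<Rightarrow> 'b) \<Rightarrow> 'a \<Rightarrow> 'b" where
  "hatp L x = L (\<lambda>_. x)"

definition hat_norm :: "((nat \<Rightarrow> 'a::real_normed_vector) \<Rightarrow> 'b::real_normed_vector) \<Rightarrow> real" where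
  "hat_norm L = (SUP x\<in>cball 0 1. norm (hatp L x))"

text \<open>Given multiplicities k 0, ..., k (n-1), position j of the m-tuple
  x_1^{k_1} ... x_n^{k_n} is occupied by the vector with index block_idx k j
  (blocks of consecutive positions).\<close>
definition block_idx :: "(nat \<Rightarrow> nat) \<Rightarrow> nat \<Rightarrow> nat" where
  "block_idx k j = (LEAST i. j < (\<Sum>l<Suc i. k l))"

definition Lpow :: "((nat \<Rightarrow> 'a) \<Rightarrow> 'b) \<Rightarrow> (nat \<Rightarrow> nat) \<Rightarrow> (nat \<Rightarrow> 'a) \<Rightarrow> 'b" where
  "Lpow L k xs = L (\<lambda>j. xs (block_idx k j))"

definition norm_n :: "nat \<Rightarrow> nat \<Rightarrow> ((nat \<Rightarrow> 'a::real_normed_vector) \<Rightarrow> 'b::real_normed_vector) \<Rightarrow> real" where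
  "norm_n m n L = (SUP p\<in>{(k, xs). (\<Sum>i<n. k i) = m \<and> (\<forall>i<n. norm (xs i) \<le> 1)}.
                     norm (Lpow L (fst p) (snd p)))"

end

theory Submission
  imports Defs
begin

(*
  Fix vectors x_0, ..., x_{n-1} in the unit ball of X.  The map
  t \<mapsto> \<Sum>i<n. t_i x_i sends the Euclidean unit sphere of R^n into the ball of radius
  sqrt n in X (Cauchy-Schwarz), so the polynomial t \<mapsto> hatp L (\<Sum>i t_i x_i) is bounded
  by sqrt n ^ m * hat_norm L on that sphere.  Banach's polarization theorem for the
  Euclidean space R^n says that a symmetric m-linear map on R^n attains its norm on the
  diagonal; applied to L restricted to the span of the x_i it bounds every
  L(x_1^{k_1} ... x_n^{k_n}), giving norm_n m n L \<le> sqrt n ^ m * hat_norm L.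
  Inserting weights c_i \<ge> 0 in front of the x_i sharpens this to
  (\<Prod> c_i^{k_i}) |L(x_1^{k_1} ... x_n^{k_n})| \<le> hat_norm L * |c|^m; for n = 2 and m odd
  one has k_1 \<noteq> k_2, and suitably unbalanced weights give a constant < sqrt 2 ^ m.
*)


section \<open>Multilinear algebra\<close>

lemma mlinear_cong: "mlinear m L \<Longrightarrow> (\<And>i. i < m \<Longrightarrow> x i = y i) \<Longrightarrow> L x = L y"
  unfolding mlinear_def by blast

lemma mlinear_add:
  "mlinear m L \<Longrightarrow> j < m \<Longrightarrow> L (x(j := a + b)) = L (x(j := a)) + L (x(j := b))"
  unfolding mlinear_def by blast

lemma mlinear_scale:
  "mlinear m L \<Longrightarrow> j < m \<Longrightarrow> L (x(j := c *\<^sub>R a)) = c *\<^sub>R L (x(j := a))"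
  unfolding mlinear_def by blast

lemma mlinear_neg: "mlinear m L \<Longrightarrow> j < m \<Longrightarrow> L (x(j := - a)) = - L (x(j := a))"
  using mlinear_scale[of m L j x "-1" a] by simp

lemma mlinear_diff:
  "mlinear m L \<Longrightarrow> j < m \<Longrightarrow> L (x(j := a - b)) = L (x(j := a)) - L (x(j := b))"
  using mlinear_add[of m L j x a "- b"] mlinear_neg[of m L j x b] by simp

lemma mlinear_scale_all:
  assumes ml: "mlinear m L"
  shows "L (\<lambda>j. f j *\<^sub>R y j) = (\<Prod>j<m. f j) *\<^sub>R L y"
proof -
  have partial: "L (\<lambda>j. if j < k then f j *\<^sub>R y j else y j) = (\<Prod>j<k. f j) *\<^sub>R L y"
    if "k \<le> m" for k
    using that
  proof (induction k)
    case (Suc k)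
    let ?y = "\<lambda>j. if j < k then f j *\<^sub>R y j else y j"
    have "(\<lambda>j. if j < Suc k then f j *\<^sub>R y j else y j) = ?y(k := f k *\<^sub>R y k)"
      and "?y(k := y k) = ?y"
      by (auto simp: fun_eq_iff)
    then have "L (\<lambda>j. if j < Suc k then f j *\<^sub>R y j else y j) = f k *\<^sub>R L ?y"
      using mlinear_scale[OF ml, of k ?y "f k" "y k"] Suc.prems by simp
    then show ?case using Suc by (simp add: mult.commute)
  qed simp
  have "L (\<lambda>j. f j *\<^sub>R y j) = L (\<lambda>j. if j < m then f j *\<^sub>R y j else y j)"
    by (rule mlinear_cong[OF ml]) simp
  then show ?thesis using partial[OF order_refl] by simp
qed

lemma hatp_scale: "mlinear m L \<Longrightarrow> hatp L (c *\<^sub>R z) = c ^ m *\<^sub>R hatp L z"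
  using mlinear_scale_all[of m L "\<lambda>_. c" "\<lambda>_. z"] by (simp add: hatp_def)

lemma hatp_zero:
  assumes "mlinear m L" "m \<ge> 1"
  shows "hatp L 0 = 0"
  using hatp_scale[OF assms(1), of 0 0] assms(2) by (simp add: zero_power)

lemma msymmetric_swap:
  assumes "msymmetric m L" "j1 < m" "j2 < m" "j1 \<noteq> j2"
  shows "L (x(j1 := a, j2 := b)) = L (x(j1 := b, j2 := a))"
proof -
  have "Transposition.transpose j1 j2 permutes {..<m}"
    using assms by (intro permutes_swap_id) auto
  moreover have "x(j1 := b, j2 := a) \<circ> Transposition.transpose j1 j2 = x(j1 := a, j2 := b)"
    using assms(4) by (auto simp: fun_eq_iff Transposition.transpose_def)
  ultimately show ?thesis using assms(1) unfolding msymmetric_def by metis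
qed

lemma polarization_two_slots:
  assumes ml: "mlinear m L" and ms: "msymmetric m L"
    and j: "j1 < m" "j2 < m" "j1 \<noteq> j2"
  shows "4 *\<^sub>R L (Y(j1 := P, j2 := Q)) = L (Y(j1 := P + Q, j2 := P + Q)) - L (Y(j1 := P - Q, j2 := P - Q))"
proof -
  define \<beta> where "\<beta> a b = L (Y(j1 := a, j2 := b))" for a b
  have tw: "Y(j1 := a, j2 := b) = (Y(j2 := b))(j1 := a)" for a b
    using j(3) by (simp add: fun_upd_twist)
  have right: "\<beta> a (b + c) = \<beta> a b + \<beta> a c" "\<beta> a (b - c) = \<beta> a b - \<beta> a c" for a b c
    unfolding \<beta>_def using mlinear_add[OF ml j(2)] mlinear_diff[OF ml j(2)] by simp_all
  have left: "\<beta> (a + b) c = \<beta> a c + \<beta> b c" "\<beta> (a - b) c = \<beta> a c - \<beta> b c" for a b c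
    unfolding \<beta>_def tw using mlinear_add[OF ml j(1)] mlinear_diff[OF ml j(1)] by simp_all
  have "\<beta> (P + Q) (P + Q) - \<beta> (P - Q) (P - Q) = 2 *\<^sub>R \<beta> P Q + 2 *\<^sub>R \<beta> Q P"
    by (simp add: left right scaleR_2 algebra_simps)
  also have "\<beta> Q P = \<beta> P Q"
    unfolding \<beta>_def using msymmetric_swap[OF ms j] by simp
  finally show ?thesis unfolding \<beta>_def by (simp add: scaleR_left_distrib[symmetric])
qed

lemma scale_two_slots:
  assumes ml: "mlinear m L" and j: "j1 < m" "j2 < m" "j1 \<noteq> j2"
  shows "L (Y(j1 := c *\<^sub>R A, j2 := c *\<^sub>R A)) = c\<^sup>2 *\<^sub>R L (Y(j1 := A, j2 := A))"
proof -
  have tw: "Y(j1 := a, j2 := b) = (Y(j2 := b))(j1 := a)" for a b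
    using j(3) by (simp add: fun_upd_twist)
  have "L (Y(j1 := c *\<^sub>R A, j2 := c *\<^sub>R A)) = c *\<^sub>R L (Y(j1 := c *\<^sub>R A, j2 := A))"
    using mlinear_scale[OF ml j(2), of "Y(j1 := c *\<^sub>R A)"] by simp
  also have "L (Y(j1 := c *\<^sub>R A, j2 := A)) = c *\<^sub>R L (Y(j1 := A, j2 := A))"
    unfolding tw using mlinear_scale[OF ml j(1), of "Y(j2 := A)"] by simp
  finally show ?thesis by (simp only: power2_eq_square scaleR_scaleR)
qed


section \<open>The norm of the associated polynomial\<close>

text \<open>Continuity of L at the origin forces polynomial growth of hatp L.\<close>

lemma hatp_growth:
  assumes ml: "mlinear m L" and mc: "mcontinuous m L" and m: "m \<ge> 1"
  obtains C where "\<And>z. norm (hatp L z) \<le> C * norm z ^ m"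
proof -
  have "isCont (hatp L) 0"
    unfolding continuous_at_sequentially comp_def hatp_def
  proof (intro allI impI)
    fix z :: "nat \<Rightarrow> 'a" assume "z \<longlonglongrightarrow> 0"
    then show "(\<lambda>k. L (\<lambda>_. z k)) \<longlonglongrightarrow> L (\<lambda>_. 0)"
      using mc[unfolded mcontinuous_def, rule_format, of "\<lambda>k _. z k" "\<lambda>_. 0"] by simp
  qed
  then have "\<forall>e>0. \<exists>d>0. \<forall>z. norm z < d \<longrightarrow> norm (hatp L z) < e"
    using hatp_zero[OF ml m] by (simp add: continuous_at_eps_delta dist_norm)
  then obtain d where d: "d > 0" "\<And>z. norm z < d \<Longrightarrow> norm (hatp L z) < 1"
    using zero_less_one by blast
  have "norm (hatp L z) \<le> (2 / d) ^ m * norm z ^ m" for z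
  proof (cases "z = 0")
    case True then show ?thesis using hatp_zero[OF ml m] m by (simp add: zero_power)
  next
    case False
    define c where "c = d / (2 * norm z)"
    have c: "c > 0" using d(1) False by (simp add: c_def)
    have "norm (c *\<^sub>R z) < d" using d(1) False by (simp add: c_def)
    then have "c ^ m * norm (hatp L z) < 1"
      using d(2)[of "c *\<^sub>R z"] hatp_scale[OF ml, of c z] c by simp
    then have "norm (hatp L z) \<le> 1 / c ^ m" using c by (simp add: field_simps)
    also have "1 / c ^ m = (2 / d) ^ m * norm z ^ m"
      using False by (simp add: c_def power_divide power_mult_distrib)
    finally show ?thesis .
  qed
  then show thesis by (rule that)
qed

text \<open>Hence hatp L is bounded on the unit ball, so hat_norm L is a genuine supremum.\<close>

lemma hatp_bdd:
  assumes "mlinear m L" "mcontinuous m L" "m \<ge> 1"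
  shows "bdd_above ((\<lambda>x. norm (hatp L x)) ` cball 0 1)"
proof -
  obtain C where C: "\<And>z. norm (hatp L z) \<le> C * norm z ^ m"
    using hatp_growth[OF assms] by blast
  have "norm (hatp L z) \<le> \<bar>C\<bar>" if "norm z \<le> 1" for z
  proof -
    have "C * norm z ^ m \<le> \<bar>C\<bar> * norm z ^ m" by (rule mult_right_mono) auto
    also have "\<dots> \<le> \<bar>C\<bar> * 1" using that by (intro mult_left_mono power_le_one) auto
    finally show ?thesis using C[of z] by simp
  qed
  then show ?thesis unfolding bdd_above_def by (intro exI[of _ "\<bar>C\<bar>"]) auto
qed

lemma hat_norm_nonneg:
  assumes "mlinear m L" "mcontinuous m L" "m \<ge> 1"
  shows "0 \<le> hat_norm L"
proof -
  have "norm (hatp L 0) \<le> hat_norm L"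
    unfolding hat_norm_def by (rule cSUP_upper[OF _ hatp_bdd[OF assms]]) simp
  then show ?thesis by (meson norm_ge_zero order_trans)
qed

lemma hatp_le:
  assumes ml: "mlinear m L" and mc: "mcontinuous m L" and m: "m \<ge> 1"
  shows "norm (hatp L z) \<le> hat_norm L * norm z ^ m"
proof (cases "z = 0")
  case True then show ?thesis using hatp_zero[OF ml m] m by (simp add: zero_power)
next
  case False
  let ?u = "(1 / norm z) *\<^sub>R z"
  have "norm (hatp L ?u) \<le> hat_norm L"
    unfolding hat_norm_def using False by (intro cSUP_upper[OF _ hatp_bdd[OF ml mc m]]) simp
  then have "norm z ^ m * norm (hatp L ?u) \<le> norm z ^ m * hat_norm L"
    by (rule mult_left_mono) simp
  moreover have "hatp L z = norm z ^ m *\<^sub>R hatp L ?u"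
    using hatp_scale[OF ml, of "norm z" ?u] False by simp
  ultimately show ?thesis by (simp add: mult.commute)
qed

lemma hat_norm_pos:
  assumes ml: "mlinear m L" and mc: "mcontinuous m L" and m: "m \<ge> 1"
    and nz: "hatp L \<noteq> (\<lambda>_. 0)"
  shows "hat_norm L > 0"
proof -
  obtain z where "hatp L z \<noteq> 0" using nz by auto
  then have "0 < norm (hatp L z)" by simp
  also have "\<dots> \<le> hat_norm L * norm z ^ m" by (rule hatp_le[OF ml mc m])
  finally show ?thesis by (auto simp: zero_less_mult_iff)
qed


text \<open>A vector t of R^n is a function nat \<Rightarrow> real of which the entries below n matter;
  span_vec n x t is the corresponding combination of x 0, ..., x (n-1).\<close>

definition span_vec :: "nat \<Rightarrow> (nat \<Rightarrow> 'a::real_normed_vector) \<Rightarrow> (nat \<Rightarrow> real) \<Rightarrow> 'a" where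
  "span_vec n x t = (\<Sum>i<n. t i *\<^sub>R x i)"

definition sumsq :: "nat \<Rightarrow> (nat \<Rightarrow> real) \<Rightarrow> real" where
  "sumsq n t = (\<Sum>i<n. (t i)\<^sup>2)"

definition dotp :: "nat \<Rightarrow> (nat \<Rightarrow> real) \<Rightarrow> (nat \<Rightarrow> real) \<Rightarrow> real" where
  "dotp n s t = (\<Sum>i<n. s i * t i)"

lemma span_vec_cong: "(\<And>i. i < n \<Longrightarrow> t i = s i) \<Longrightarrow> span_vec n x t = span_vec n x s"
  by (simp add: span_vec_def)

lemma span_vec_add: "span_vec n x (\<lambda>i. t i + s i) = span_vec n x t + span_vec n x s"
  by (simp add: span_vec_def scaleR_add_left sum.distrib)

lemma span_vec_diff: "span_vec n x (\<lambda>i. t i - s i) = span_vec n x t - span_vec n x s"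
  by (simp add: span_vec_def scaleR_diff_left sum_subtractf)

lemma span_vec_scale: "span_vec n x (\<lambda>i. c * t i) = c *\<^sub>R span_vec n x t"
  by (simp add: span_vec_def scaleR_sum_right)

lemma span_vec_unit:
  assumes "b < n"
  shows "span_vec n x (\<lambda>i. if i = b then 1 else 0) = x b"
proof -
  have "span_vec n x (\<lambda>i. if i = b then 1 else 0) = (\<Sum>i<n. if i = b then x b else 0)"
    unfolding span_vec_def by (rule sum.cong) auto
  then show ?thesis using assms by simp
qed

lemma sumsq_unit:
  assumes "b < n"
  shows "sumsq n (\<lambda>i. if i = b then 1 else 0) = 1"
proof -
  have "sumsq n (\<lambda>i. if i = b then 1 else 0) = (\<Sum>i<n. if i = b then 1 else 0)"
    unfolding sumsq_def by (rule sum.cong) auto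
  then show ?thesis using assms by simp
qed

text \<open>Cauchy-Schwarz: a unit combination of vectors of norms at most c i has norm at most |c|.\<close>

lemma norm_span_vec_le:
  assumes y: "\<And>i. i < n \<Longrightarrow> norm (y i) \<le> c i" and t: "sumsq n t = 1"
  shows "norm (span_vec n y t) \<le> sqrt (\<Sum>i<n. (c i)\<^sup>2)"
proof -
  have "norm (span_vec n y t) \<le> (\<Sum>i<n. \<bar>t i\<bar> * \<bar>c i\<bar>)"
    unfolding span_vec_def
  proof (rule order_trans[OF norm_sum sum_mono])
    fix i assume "i \<in> {..<n}"
    then show "norm (t i *\<^sub>R y i) \<le> \<bar>t i\<bar> * \<bar>c i\<bar>"
      using y[of i] by (auto intro: mult_left_mono)
  qed
  also have "\<dots> \<le> L2_set t {..<n} * L2_set c {..<n}" by (rule L2_set_mult_ineq)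
  also have "L2_set t {..<n} = 1" using t by (simp add: L2_set_def sumsq_def)
  finally show ?thesis by (simp add: L2_set_def)
qed

lemma sumsq_nonneg: "0 \<le> sumsq n t"
  by (simp add: sumsq_def sum_nonneg)

lemma sumsq_eq_0_iff: "sumsq n t = 0 \<longleftrightarrow> (\<forall>i<n. t i = 0)"
  unfolding sumsq_def by (subst sum_nonneg_eq_0_iff) auto

lemma sumsq_entry_le: "i < n \<Longrightarrow> (t i)\<^sup>2 \<le> sumsq n t"
  unfolding sumsq_def by (rule member_le_sum) auto

lemma sumsq_add_scaled:
  "sumsq n (\<lambda>i. a i + c * b i) = sumsq n a + 2 * c * dotp n a b + c\<^sup>2 * sumsq n b"
proof -
  have "(a i + c * b i)\<^sup>2 = (a i)\<^sup>2 + 2 * c * (a i * b i) + c\<^sup>2 * (b i)\<^sup>2" for i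
    by (simp add: power2_eq_square algebra_simps)
  then show ?thesis by (simp add: sumsq_def dotp_def sum.distrib sum_distrib_left)
qed

lemma sumsq_parallelogram:
  "sumsq n (\<lambda>i. p i + q i) + sumsq n (\<lambda>i. p i - q i) = 2 * sumsq n p + 2 * sumsq n q"
proof -
  have "(p i + q i)\<^sup>2 + (p i - q i)\<^sup>2 = 2 * (p i)\<^sup>2 + 2 * (q i)\<^sup>2" for i
    by (simp add: power2_eq_square algebra_simps)
  then show ?thesis by (simp add: sumsq_def sum.distrib[symmetric] sum_distrib_left)
qed

lemma sumsq_normalize:
  assumes "0 < sumsq n s"
  shows "sumsq n (\<lambda>i. s i / sqrt (sumsq n s)) = 1"
  using assms by (simp add: sumsq_def power_divide sum_divide_distrib[symmetric])


section \<open>Banach's polarization theorem on R^n\<close>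

text \<open>Tuples of coefficient vectors are functions nat \<Rightarrow> nat \<Rightarrow> real, carrying the product
  topology; convergence there is entrywise convergence.\<close>

lemma tendsto_fun_iff:
  fixes f :: "'c \<Rightarrow> 'a \<Rightarrow> 'b::topological_space"
  shows "(f \<longlongrightarrow> l) F \<longleftrightarrow> (\<forall>i. ((\<lambda>c. f c i) \<longlongrightarrow> l i) F)"
  using limitin_componentwise[of "\<lambda>_. euclidean" UNIV f l F]
  by (simp add: euclidean_product_topology)

lemma compact_PiE_UNIV:
  fixes S :: "'a \<Rightarrow> 'b::topological_space set"
  assumes "\<And>i. compact (S i)"
  shows "compact (PiE UNIV S)"
  using compactin_PiE[of "\<lambda>_. euclidean" UNIV S] assms
  by (simp add: euclidean_product_topology)

lemma continuous_on_entry [continuous_intros]: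
  "continuous_on S (\<lambda>v::'a \<Rightarrow> 'b \<Rightarrow> 'c::topological_space. v j i)"
proof (rule continuous_on_product_then_coordinatewise[where f = "\<lambda>v. v j"])
  show "continuous_on S (\<lambda>v. v j)"
    by (rule continuous_on_subset[OF continuous_on_product_coordinates]) simp
qed

definition unit_rows :: "nat \<Rightarrow> nat \<Rightarrow> (nat \<Rightarrow> nat \<Rightarrow> real) set" where
  "unit_rows m n = {v. (\<forall>j<m. sumsq n (v j) = 1) \<and> (\<forall>j i. \<not> (j < m \<and> i < n) \<longrightarrow> v j i = 0)}"

lemma compact_unit_rows: "compact (unit_rows m n)"
proof -
  define box where "box = PiE UNIV (\<lambda>j. PiE UNIV (\<lambda>i. if j < m \<and> i < n then {-1..1} else {0::real}))"
  have "compact box" unfolding box_def by (intro compact_PiE_UNIV) auto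
  moreover have "closed (\<Inter>j<m. {v. sumsq n (v j) = 1})"
    unfolding sumsq_def by (intro closed_INT ballI closed_Collect_eq continuous_intros)
  moreover have "unit_rows m n = (\<Inter>j<m. {v. sumsq n (v j) = 1}) \<inter> box"
  proof (intro equalityI subsetI)
    fix v assume v: "v \<in> unit_rows m n"
    have "\<bar>v j i\<bar> \<le> 1" if "j < m" "i < n" for j i
      using sumsq_entry_le[OF that(2), of "v j"] v that(1) by (simp add: unit_rows_def abs_square_le_1)
    then show "v \<in> (\<Inter>j<m. {v. sumsq n (v j) = 1}) \<inter> box"
      using v by (simp add: unit_rows_def box_def PiE_iff abs_le_iff)
  next
    fix v assume "v \<in> (\<Inter>j<m. {v. sumsq n (v j) = 1}) \<inter> box"
    then have "\<forall>j<m. sumsq n (v j) = 1" "\<And>j i. v j i \<in> (if j < m \<and> i < n then {-1..1} else {0})"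
      by (simp_all add: box_def PiE_iff)
    moreover have "v j i = 0" if "\<not> (j < m \<and> i < n)" for j i
      using \<open>\<And>j i. v j i \<in> _\<close>[of j i] that by simp
    ultimately show "v \<in> unit_rows m n" by (simp add: unit_rows_def)
  qed
  ultimately show ?thesis by (simp add: closed_Int_compact)
qed

lemma unit_rows_nonempty: "n \<ge> 1 \<Longrightarrow> (\<lambda>j i. if j < m \<and> i = 0 then 1 else 0) \<in> unit_rows m n"
  using sumsq_unit[of 0 n] by (simp add: unit_rows_def)

lemma unit_rows_upd:
  assumes "v \<in> unit_rows m n" "j < m" "sumsq n t = 1" "\<And>i. i \<ge> n \<Longrightarrow> t i = 0"
  shows "v(j := t) \<in> unit_rows m n"
  using assms by (auto simp: unit_rows_def)

lemma unit_rows_restrict: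
  assumes "\<And>j. j < m \<Longrightarrow> sumsq n (u j) = 1"
  shows "(\<lambda>j i. if j < m \<and> i < n then u j i else 0) \<in> unit_rows m n"
proof -
  have "sumsq n (\<lambda>i. if j < m \<and> i < n then u j i else 0) = sumsq n (u j)" if "j < m" for j
    unfolding sumsq_def using that by (intro sum.cong) auto
  then show ?thesis using assms by (auto simp: unit_rows_def)
qed

definition coef_map :: "((nat \<Rightarrow> 'a::real_normed_vector) \<Rightarrow> 'b) \<Rightarrow> nat \<Rightarrow> (nat \<Rightarrow> 'a)
    \<Rightarrow> (nat \<Rightarrow> nat \<Rightarrow> real) \<Rightarrow> 'b" where
  "coef_map L n x v = L (\<lambda>j. span_vec n x (v j))"

definition colsum :: "nat \<Rightarrow> (nat \<Rightarrow> nat \<Rightarrow> real) \<Rightarrow> nat \<Rightarrow> real" where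
  "colsum m v i = (\<Sum>j<m. v j i)"

lemma coef_map_continuous:
  assumes mc: "mcontinuous m L"
  shows "continuous_on UNIV (coef_map L n x)"
proof (rule continuous_on_sequentiallyI)
  fix s :: "nat \<Rightarrow> nat \<Rightarrow> nat \<Rightarrow> real" and v assume "s \<longlonglongrightarrow> v"
  then have "(\<lambda>k. s k j i) \<longlonglongrightarrow> v j i" for j i
    by (simp add: tendsto_fun_iff)
  then have "(\<lambda>k. span_vec n x (s k j)) \<longlonglongrightarrow> span_vec n x (v j)" for j
    unfolding span_vec_def by (intro tendsto_intros)
  then show "(\<lambda>k. coef_map L n x (s k)) \<longlonglongrightarrow> coef_map L n x v"
    using mc[unfolded mcontinuous_def, rule_format,
        of "\<lambda>k j. span_vec n x (s k j)" "\<lambda>j. span_vec n x (v j)"]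
    unfolding coef_map_def by blast
qed

lemma colsum_upd: "j < m \<Longrightarrow> colsum m (w(j := f)) i = colsum m w i - w j i + f i"
  unfolding colsum_def
  by (simp add: sum.remove[of "{..<m}" j] sum.cong[of "{..<m} - {j}" _ "\<lambda>k. (w(j := f)) k i"])

lemma coef_map_flip:
  assumes ml: "mlinear m L" and j: "j < m"
  shows "coef_map L n x (w(j := \<lambda>i. - w j i)) = - coef_map L n x w"
proof -
  define Y where "Y k = span_vec n x (w k)" for k
  have coef_Y: "coef_map L n x w = L Y" unfolding coef_map_def Y_def[abs_def] ..
  have "(\<lambda>k. span_vec n x ((w(j := \<lambda>i. - w j i)) k)) = Y(j := - Y j)"
    using span_vec_scale[of n x "-1" "w j"] by (auto simp: fun_eq_iff Y_def)
  then have "coef_map L n x (w(j := \<lambda>i. - w j i)) = L (Y(j := - Y j))"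
    by (simp only: coef_map_def)
  also have "\<dots> = - L (Y(j := Y j))" by (rule mlinear_neg[OF ml j])
  finally show ?thesis using coef_Y by simp
qed

lemma coef_map_polarization:
  assumes ml: "mlinear m L" and ms: "msymmetric m L" and j: "j1 < m" "j0 < m" "j1 \<noteq> j0"
    and s: "\<And>i. i < n \<Longrightarrow> w j1 i + w j0 i = \<nu> * a i"
    and d: "\<And>i. i < n \<Longrightarrow> w j1 i - w j0 i = \<delta> * e i"
  shows "4 *\<^sub>R coef_map L n x w
    = \<nu>\<^sup>2 *\<^sub>R coef_map L n x (w(j1 := a, j0 := a)) - \<delta>\<^sup>2 *\<^sub>R coef_map L n x (w(j1 := e, j0 := e))"
proof -
  define Y where "Y k = span_vec n x (w k)" for k
  have "Y j1 + Y j0 = span_vec n x (\<lambda>i. \<nu> * a i)"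
    unfolding Y_def span_vec_add[symmetric] using s by (rule span_vec_cong)
  then have plus: "Y j1 + Y j0 = \<nu> *\<^sub>R span_vec n x a" by (simp add: span_vec_scale)
  have "Y j1 - Y j0 = span_vec n x (\<lambda>i. \<delta> * e i)"
    unfolding Y_def span_vec_diff[symmetric] using d by (rule span_vec_cong)
  then have minus: "Y j1 - Y j0 = \<delta> *\<^sub>R span_vec n x e" by (simp add: span_vec_scale)
  have upd: "(\<lambda>k. span_vec n x ((w(j1 := t, j0 := t)) k)) = Y(j1 := span_vec n x t, j0 := span_vec n x t)"
    for t by (auto simp: fun_eq_iff Y_def)
  have "coef_map L n x w = L Y" unfolding coef_map_def Y_def[abs_def] ..
  then have "4 *\<^sub>R coef_map L n x w = 4 *\<^sub>R L (Y(j1 := Y j1, j0 := Y j0))" by simp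
  also have "\<dots> = L (Y(j1 := Y j1 + Y j0, j0 := Y j1 + Y j0)) - L (Y(j1 := Y j1 - Y j0, j0 := Y j1 - Y j0))"
    by (rule polarization_two_slots[OF ml ms j])
  also have "\<dots> = \<nu>\<^sup>2 *\<^sub>R L (Y(j1 := span_vec n x a, j0 := span_vec n x a))
      - \<delta>\<^sup>2 *\<^sub>R L (Y(j1 := span_vec n x e, j0 := span_vec n x e))"
    unfolding plus minus scale_two_slots[OF ml j] ..
  finally show ?thesis by (simp only: coef_map_def upd)
qed

definition extremal_rows :: "((nat \<Rightarrow> 'a::real_normed_vector) \<Rightarrow> 'b::real_normed_vector)
    \<Rightarrow> nat \<Rightarrow> nat \<Rightarrow> (nat \<Rightarrow> 'a) \<Rightarrow> (nat \<Rightarrow> nat \<Rightarrow> real) \<Rightarrow> bool" where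
  "extremal_rows L m n x w \<longleftrightarrow> w \<in> unit_rows m n
     \<and> (\<forall>v\<in>unit_rows m n. norm (coef_map L n x v) \<le> norm (coef_map L n x w))
     \<and> (\<forall>v\<in>unit_rows m n. norm (coef_map L n x v) = norm (coef_map L n x w)
          \<longrightarrow> sumsq n (colsum m v) \<le> sumsq n (colsum m w))"

lemma extremal_rows_exist:
  assumes mc: "mcontinuous m L" and n: "n \<ge> 1"
  obtains w where "extremal_rows L m n x w"
proof -
  let ?G = "\<lambda>v. norm (coef_map L n x v)"
  have contG: "continuous_on UNIV ?G"
    by (intro continuous_on_norm coef_map_continuous[OF mc])
  obtain u where u: "u \<in> unit_rows m n" "\<forall>v\<in>unit_rows m n. ?G v \<le> ?G u"
    using continuous_attains_sup[OF compact_unit_rows _ continuous_on_subset[OF contG]]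
      unit_rows_nonempty[OF n] by blast
  define K where "K = unit_rows m n \<inter> {v. ?G v = ?G u}"
  have "compact K"
    unfolding K_def by (intro compact_Int_closed compact_unit_rows closed_Collect_eq contG
        continuous_on_const)
  moreover have "u \<in> K" using u by (simp add: K_def)
  moreover have "continuous_on K (\<lambda>v. sumsq n (colsum m v))"
    unfolding sumsq_def colsum_def by (intro continuous_intros)
  ultimately obtain w where w: "w \<in> K" "\<forall>v\<in>K. sumsq n (colsum m v) \<le> sumsq n (colsum m w)"
    using continuous_attains_sup[of K "\<lambda>v. sumsq n (colsum m v)"] by blast
  then have "extremal_rows L m n x w" using u by (auto simp: extremal_rows_def K_def)
  then show thesis by (rule that)
qed

text \<open>Flipping the sign of one row keeps a maximizer; maximality of the row sum then gives
  that every row has inner product at least 1 with the row sum.\<close>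

lemma extremal_rows_dotp:
  assumes ml: "mlinear m L" and w: "extremal_rows L m n x w" and j: "j < m"
  shows "1 \<le> dotp n (colsum m w) (w j)"
proof -
  define w' where "w' = w(j := \<lambda>i. - w j i)"
  have wU: "w \<in> unit_rows m n" using w by (simp add: extremal_rows_def)
  then have "w' \<in> unit_rows m n"
    unfolding w'_def using j by (intro unit_rows_upd) (auto simp: unit_rows_def sumsq_def)
  moreover have "norm (coef_map L n x w') = norm (coef_map L n x w)"
    using coef_map_flip[OF ml j] by (simp add: w'_def)
  ultimately have "sumsq n (colsum m w') \<le> sumsq n (colsum m w)"
    using w by (simp add: extremal_rows_def)
  moreover have col: "colsum m w' = (\<lambda>i. colsum m w i + (-2) * w j i)"
    using colsum_upd[OF j] by (simp add: w'_def fun_eq_iff)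
  have "sumsq n (colsum m w')
      = sumsq n (colsum m w) - 4 * dotp n (colsum m w) (w j) + 4 * sumsq n (w j)"
    unfolding col sumsq_add_scaled by simp
  moreover have "sumsq n (w j) = 1" using wU j by (simp add: unit_rows_def)
  ultimately show ?thesis by linarith
qed

text \<open>Merging two distinct rows p, q of an extremal tuple into their normalized sum a
  keeps the value of |L| maximal, by polarization and the parallelogram law.\<close>

lemma extremal_rows_merge:
  assumes ml: "mlinear m L" and ms: "msymmetric m L" and w: "extremal_rows L m n x w"
    and j: "j1 < m" "j0 < m" "j1 \<noteq> j0"
    and pos: "0 < sumsq n (\<lambda>i. w j1 i + w j0 i)" "0 < sumsq n (\<lambda>i. w j1 i - w j0 i)"
  defines "a \<equiv> \<lambda>i. (w j1 i + w j0 i) / sqrt (sumsq n (\<lambda>i. w j1 i + w j0 i))"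
  shows "w(j1 := a, j0 := a) \<in> unit_rows m n"
    and "norm (coef_map L n x (w(j1 := a, j0 := a))) = norm (coef_map L n x w)"
proof -
  define \<nu> where "\<nu> = sqrt (sumsq n (\<lambda>i. w j1 i + w j0 i))"
  define \<delta> where "\<delta> = sqrt (sumsq n (\<lambda>i. w j1 i - w j0 i))"
  define e where "e i = (w j1 i - w j0 i) / \<delta>" for i
  let ?G = "\<lambda>v. norm (coef_map L n x v)"
  have wU: "w \<in> unit_rows m n" and wmax: "\<And>v. v \<in> unit_rows m n \<Longrightarrow> ?G v \<le> ?G w"
    using w by (auto simp: extremal_rows_def)
  have zero: "\<And>i. i \<ge> n \<Longrightarrow> w j1 i = 0 \<and> w j0 i = 0" using wU j by (simp add: unit_rows_def)
  show aU: "w(j1 := a, j0 := a) \<in> unit_rows m n"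
    using pos(1) j zero unfolding a_def
    by (intro unit_rows_upd wU sumsq_normalize) auto
  have eU: "w(j1 := e, j0 := e) \<in> unit_rows m n"
    using pos(2) j zero unfolding e_def \<delta>_def
    by (intro unit_rows_upd wU sumsq_normalize) auto
  have sum_eq: "\<And>i. i < n \<Longrightarrow> w j1 i + w j0 i = \<nu> * a i"
    using pos(1) by (simp add: a_def \<nu>_def)
  have diff_eq: "\<And>i. i < n \<Longrightarrow> w j1 i - w j0 i = \<delta> * e i"
    using pos(2) by (simp add: e_def \<delta>_def)
  have "\<nu>\<^sup>2 + \<delta>\<^sup>2 = 4"
    using pos sumsq_parallelogram[of n "w j1" "w j0"] wU j
    by (simp add: \<nu>_def \<delta>_def unit_rows_def)
  have polar: "4 *\<^sub>R coef_map L n x w = \<nu>\<^sup>2 *\<^sub>R coef_map L n x (w(j1 := a, j0 := a))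
      - \<delta>\<^sup>2 *\<^sub>R coef_map L n x (w(j1 := e, j0 := e))"
    by (rule coef_map_polarization[OF ml ms j, where w = w]) (use sum_eq diff_eq in auto)
  have "4 * ?G w = norm (4 *\<^sub>R coef_map L n x w)" by simp
  also have "\<dots> = norm (\<nu>\<^sup>2 *\<^sub>R coef_map L n x (w(j1 := a, j0 := a))
      - \<delta>\<^sup>2 *\<^sub>R coef_map L n x (w(j1 := e, j0 := e)))"
    unfolding polar ..
  also have "\<dots> \<le> norm (\<nu>\<^sup>2 *\<^sub>R coef_map L n x (w(j1 := a, j0 := a)))
      + norm (\<delta>\<^sup>2 *\<^sub>R coef_map L n x (w(j1 := e, j0 := e)))"
    by (rule norm_triangle_ineq4)
  also have "\<dots> \<le> \<nu>\<^sup>2 * ?G (w(j1 := a, j0 := a)) + \<delta>\<^sup>2 * ?G w"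
    using wmax[OF eU] by (simp add: mult_left_mono)
  finally have "(\<nu>\<^sup>2 + \<delta>\<^sup>2) * ?G w \<le> \<nu>\<^sup>2 * ?G (w(j1 := a, j0 := a)) + \<delta>\<^sup>2 * ?G w"
    using \<open>\<nu>\<^sup>2 + \<delta>\<^sup>2 = 4\<close> by simp
  then have "\<nu>\<^sup>2 * ?G w \<le> \<nu>\<^sup>2 * ?G (w(j1 := a, j0 := a))"
    by (simp add: distrib_right)
  then have "?G w \<le> ?G (w(j1 := a, j0 := a))" using pos(1) by (simp add: \<nu>_def)
  then show "?G (w(j1 := a, j0 := a)) = ?G w" using wmax[OF aU] by simp
qed

text \<open>All rows of an extremal tuple coincide: otherwise merging two different rows p, q
  gives another maximizer whose row sum is strictly longer.\<close>

lemma extremal_rows_equal: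
  assumes ml: "mlinear m L" and ms: "msymmetric m L" and w: "extremal_rows L m n x w"
    and j: "j1 < m" and i: "i < n"
  shows "w j1 i = w 0 i"
proof (rule ccontr)
  assume ne: "w j1 i \<noteq> w 0 i"
  have j0: "0 < m" "j1 \<noteq> 0"
    using j by simp (use ne in \<open>rule contrapos_nn, simp\<close>)
  define \<sigma> where "\<sigma> = colsum m w"
  define s where "s = (\<lambda>i. w j1 i + w 0 i)"
  have "sumsq n (\<lambda>i. w j1 i - w 0 i) \<noteq> 0" using ne i by (auto simp: sumsq_eq_0_iff)
  then have "0 < sumsq n (\<lambda>i. w j1 i - w 0 i)" using sumsq_nonneg by (simp add: less_le)
  have "dotp n \<sigma> s = dotp n \<sigma> (w j1) + dotp n \<sigma> (w 0)"
    by (simp add: dotp_def s_def distrib_left sum.distrib)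
  then have dot: "2 \<le> dotp n \<sigma> s"
    using extremal_rows_dotp[OF ml w j] extremal_rows_dotp[OF ml w j0(1)] by (simp add: \<sigma>_def)
  then have "0 < sumsq n s"
    using sumsq_nonneg[of n s] sumsq_eq_0_iff[of n s] by (force simp: dotp_def)
  define \<nu> where "\<nu> = sqrt (sumsq n s)"
  define a where "a = (\<lambda>i. s i / \<nu>)"
  define wa where "wa = w(j1 := a, 0 := a)"
  have "sumsq n s + sumsq n (\<lambda>i. w j1 i - w 0 i) = 4"
    using sumsq_parallelogram[of n "w j1" "w 0"] w j j0
    by (simp add: s_def extremal_rows_def unit_rows_def)
  then have "\<nu> < 2"
    using \<open>0 < sumsq n (\<lambda>i. w j1 i - w 0 i)\<close> real_sqrt_less_iff[of "sumsq n s" 4]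
    by (simp add: \<nu>_def real_sqrt_four)
  have merge: "wa \<in> unit_rows m n" "norm (coef_map L n x wa) = norm (coef_map L n x w)"
    using extremal_rows_merge[OF ml ms w j j0(1) j0(2)] \<open>0 < sumsq n s\<close>
      \<open>0 < sumsq n (\<lambda>i. w j1 i - w 0 i)\<close>
    by (simp_all add: wa_def a_def \<nu>_def s_def)
  define \<mu> where "\<mu> = 2 / \<nu> - 1"
  have "\<mu> > 0" using \<open>\<nu> < 2\<close> \<open>0 < sumsq n s\<close> by (simp add: \<mu>_def \<nu>_def)
  have "colsum m wa = (\<lambda>i. \<sigma> i - s i + 2 * a i)"
    using colsum_upd[OF j0(1), of "w(j1 := a)"] colsum_upd[OF j] j0
    by (simp add: fun_eq_iff wa_def \<sigma>_def s_def)
  also have "\<dots> = (\<lambda>i. \<sigma> i + \<mu> * s i)"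
    using \<open>0 < sumsq n s\<close> by (simp add: fun_eq_iff \<mu>_def a_def \<nu>_def field_simps)
  finally have "colsum m wa = (\<lambda>i. \<sigma> i + \<mu> * s i)" .
  then have "sumsq n (colsum m wa) = sumsq n \<sigma> + 2 * \<mu> * dotp n \<sigma> s + \<mu>\<^sup>2 * sumsq n s"
    by (simp add: sumsq_add_scaled)
  moreover have "sumsq n (colsum m wa) \<le> sumsq n \<sigma>"
    using w merge by (simp add: extremal_rows_def \<sigma>_def)
  moreover have "0 < 2 * \<mu> * dotp n \<sigma> s" using \<open>\<mu> > 0\<close> dot by simp
  moreover have "0 \<le> \<mu>\<^sup>2 * sumsq n s" using sumsq_nonneg by simp
  ultimately show False by linarith
qed

text \<open>Banach's theorem for L restricted to the span of x 0, ..., x (n-1) with the Euclidean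
  structure of the coefficients: a bound for the polynomial on the unit sphere bounds L on
  all tuples of unit vectors.\<close>

theorem banach_polarization:
  assumes ml: "mlinear m L" and ms: "msymmetric m L" and mc: "mcontinuous m L"
    and m: "m \<ge> 1" and n: "n \<ge> 1"
    and B: "\<And>t. sumsq n t = 1 \<Longrightarrow> norm (hatp L (span_vec n x t)) \<le> B"
    and u: "\<And>j. j < m \<Longrightarrow> sumsq n (u j) = 1"
  shows "norm (L (\<lambda>j. span_vec n x (u j))) \<le> B"
proof -
  obtain w where w: "extremal_rows L m n x w" using extremal_rows_exist[OF mc n] by blast
  then have wU: "w \<in> unit_rows m n" by (simp add: extremal_rows_def)
  have "coef_map L n x w = hatp L (span_vec n x (w 0))"
    unfolding coef_map_def hatp_def
    by (rule mlinear_cong[OF ml]) (auto intro: span_vec_cong extremal_rows_equal[OF ml ms w])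
  moreover have "sumsq n (w 0) = 1" using wU m by (simp add: unit_rows_def)
  ultimately have "norm (coef_map L n x w) \<le> B" using B by simp
  define ut where "ut = (\<lambda>j i. if j < m \<and> i < n then u j i else 0)"
  have "norm (coef_map L n x ut) \<le> norm (coef_map L n x w)"
    using w unit_rows_restrict[OF u] by (simp add: extremal_rows_def ut_def)
  moreover have "coef_map L n x ut = L (\<lambda>j. span_vec n x (u j))"
    unfolding coef_map_def by (rule mlinear_cong[OF ml]) (auto simp: ut_def intro: span_vec_cong)
  ultimately show ?thesis using \<open>norm (coef_map L n x w) \<le> B\<close> by simp
qed


section \<open>The weighted bound\<close>

lemma block_idx_le: "j < (\<Sum>l<Suc i. k l) \<Longrightarrow> block_idx k j \<le> i"
  unfolding block_idx_def by (rule Least_le)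

lemma block_idx_less:
  assumes "(\<Sum>i<n. k i) = m" "j < m" "n \<ge> 1"
  shows "block_idx k j < n"
  using block_idx_le[of j k "n - 1"] assms by simp

lemma block_idx_two:
  assumes "k 0 + k 1 = m" "j < m"
  shows "block_idx k j = (if j < k 0 then 0 else 1)"
proof -
  have ex: "j < (\<Sum>l<Suc 1. k l)" using assms by simp
  have le1: "block_idx k j \<le> 1" using block_idx_le[OF ex] .
  have "j < (\<Sum>l<Suc (block_idx k j). k l)"
    unfolding block_idx_def using ex by (rule LeastI)
  moreover have "j < k 0 \<Longrightarrow> block_idx k j \<le> 0" by (rule block_idx_le) simp
  ultimately show ?thesis using le1 by (cases "block_idx k j") auto
qed

lemma Lpow_weighted_bound:
  fixes L :: "(nat \<Rightarrow> 'a::real_normed_vector) \<Rightarrow> 'b::real_normed_vector"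
  assumes ml: "mlinear m L" and ms: "msymmetric m L" and mc: "mcontinuous m L"
    and m: "m \<ge> 1" and n: "n \<ge> 1"
    and k: "(\<Sum>i<n. k i) = m" and xs: "\<forall>i<n. norm (xs i) \<le> 1"
    and c: "\<forall>i<n. c i \<ge> 0"
  shows "(\<Prod>j<m. c (block_idx k j)) * norm (Lpow L k xs) \<le> hat_norm L * sqrt (\<Sum>i<n. (c i)\<^sup>2) ^ m"
proof -
  define y where "y i = c i *\<^sub>R xs i" for i
  define u where "u j = (\<lambda>i. if i = block_idx k j then (1::real) else 0)" for j
  have bl: "block_idx k j < n" if "j < m" for j using block_idx_less[OF k that n] .
  have "norm (L (\<lambda>j. span_vec n y (u j))) \<le> hat_norm L * sqrt (\<Sum>i<n. (c i)\<^sup>2) ^ m"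
  proof (rule banach_polarization[OF ml ms mc m n])
    fix t assume t: "sumsq n t = 1"
    have "norm (span_vec n y t) \<le> sqrt (\<Sum>i<n. (c i)\<^sup>2)"
      using xs c t by (intro norm_span_vec_le) (auto simp: y_def mult_left_le)
    then show "norm (hatp L (span_vec n y t)) \<le> hat_norm L * sqrt (\<Sum>i<n. (c i)\<^sup>2) ^ m"
      using hatp_le[OF ml mc m] hat_norm_nonneg[OF ml mc m]
      by (meson mult_left_mono norm_ge_zero order_trans power_mono)
  next
    fix j assume "j < m"
    then show "sumsq n (u j) = 1" using bl by (simp add: u_def sumsq_unit)
  qed
  moreover have "L (\<lambda>j. span_vec n y (u j)) = L (\<lambda>j. c (block_idx k j) *\<^sub>R xs (block_idx k j))"
    by (rule mlinear_cong[OF ml]) (simp add: u_def span_vec_unit bl y_def)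
  moreover have "\<dots> = (\<Prod>j<m. c (block_idx k j)) *\<^sub>R Lpow L k xs"
    unfolding Lpow_def by (rule mlinear_scale_all[OF ml])
  moreover have "(\<Prod>j<m. c (block_idx k j)) \<ge> 0" using c bl by (auto intro: prod_nonneg)
  ultimately show ?thesis by simp
qed


section \<open>The case n = 2, m odd\<close>

text \<open>Unbalanced weights beat sqrt 2: if 2k > m then ((y^2 + 1)/2)^m < y^(2k) for some y > 1,
  since the derivative of the difference at y = 1 is 2k - m > 0.\<close>

lemma unbalanced_weight:
  fixes k m :: nat
  assumes "2 * k > m"
  shows "\<exists>y>0. sqrt (y\<^sup>2 + 1) ^ m < sqrt 2 ^ m * y ^ k"
proof -
  define g where "g y = y ^ (2 * k) - ((y\<^sup>2 + 1) / 2) ^ m" for y :: real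
  have "DERIV g 1 :> (real (2 * k) - real m)"
    unfolding g_def by (rule derivative_eq_intros refl | simp)+
  moreover have "0 < real (2 * k) - real m" using assms by simp
  ultimately obtain d where d: "d > 0" "\<forall>h>0. h < d \<longrightarrow> g 1 < g (1 + h)"
    using DERIV_pos_inc_right by blast
  define y where "y = 1 + d / 2"
  have y: "y > 0" using d by (simp add: y_def)
  have "g 1 < g y" using d unfolding y_def by auto
  then have "(y\<^sup>2 + 1) ^ m < 2 ^ m * (y ^ k)\<^sup>2"
    by (simp add: g_def power_divide divide_less_eq mult.commute power_mult[symmetric])
  then have "sqrt ((y\<^sup>2 + 1) ^ m) < sqrt (2 ^ m) * sqrt ((y ^ k)\<^sup>2)"
    unfolding real_sqrt_mult[symmetric] by (rule real_sqrt_less_mono)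
  moreover have "sqrt ((y ^ k)\<^sup>2) = y ^ k" using y by (intro real_sqrt_unique) auto
  ultimately show ?thesis using y by (intro exI[of _ y]) (simp only: real_sqrt_power)
qed

text \<open>For odd m every split k0 + (m - k0) is unbalanced, so weights \<alpha>, \<beta> \<ge> 0 with
  |(\<alpha>, \<beta>)|^m < sqrt 2 ^ m * \<alpha>^k0 * \<beta>^(m - k0) exist.\<close>

lemma weights_odd:
  assumes "odd m" "k0 \<le> m"
  obtains \<alpha> \<beta> :: real where "0 \<le> \<alpha>" "0 \<le> \<beta>"
    and "sqrt (\<alpha>\<^sup>2 + \<beta>\<^sup>2) ^ m < sqrt 2 ^ m * (\<alpha> ^ k0 * \<beta> ^ (m - k0))"
proof (cases "2 * k0 > m")
  case True
  then obtain y where "y > 0" "sqrt (y\<^sup>2 + 1) ^ m < sqrt 2 ^ m * y ^ k0"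
    using unbalanced_weight by blast
  then show thesis by (intro that[of y 1]) auto
next
  case False
  then have "2 * (m - k0) > m" using assms by presburger
  then obtain y where "y > 0" "sqrt (y\<^sup>2 + 1) ^ m < sqrt 2 ^ m * y ^ (m - k0)"
    using unbalanced_weight by blast
  then show thesis by (intro that[of 1 y]) (auto simp: add.commute)
qed

lemma prod_split_at: "(\<Prod>j<m. if j < k0 then a else b) = a ^ min k0 m * (b::real) ^ (m - k0)"
proof (induction m)
  case (Suc m)
  show ?case
  proof (cases "m < k0")
    case True
    then have "min k0 (Suc m) = Suc (min k0 m)" "Suc m - k0 = m - k0" by auto
    then show ?thesis using Suc True by simp
  next
    case False
    then have "min k0 (Suc m) = min k0 m" "Suc m - k0 = Suc (m - k0)" by auto
    then show ?thesis using Suc False by (simp add: mult.assoc)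
  qed
qed simp

lemma Lpow_two_odd_bound:
  fixes L :: "(nat \<Rightarrow> 'a::real_normed_vector) \<Rightarrow> 'b::real_normed_vector"
  assumes ml: "mlinear m L" and ms: "msymmetric m L" and mc: "mcontinuous m L"
    and odd: "odd m" and k0: "k0 \<le> m"
  shows "\<exists>C < sqrt 2 ^ m. \<forall>k xs. k 0 = k0 \<longrightarrow> (\<Sum>i<2. k i) = m \<longrightarrow> (\<forall>i<2. norm (xs i) \<le> 1)
           \<longrightarrow> norm (Lpow L k xs) \<le> C * hat_norm L"
proof -
  obtain \<alpha> \<beta> :: real where ab: "0 \<le> \<alpha>" "0 \<le> \<beta>"
    and less: "sqrt (\<alpha>\<^sup>2 + \<beta>\<^sup>2) ^ m < sqrt 2 ^ m * (\<alpha> ^ k0 * \<beta> ^ (m - k0))"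
    using weights_odd[OF odd k0] by blast
  define P where "P = \<alpha> ^ k0 * \<beta> ^ (m - k0)"
  define R where "R = sqrt (\<alpha>\<^sup>2 + \<beta>\<^sup>2) ^ m"
  have "0 \<le> sqrt (\<alpha>\<^sup>2 + \<beta>\<^sup>2) ^ m" by simp
  then have "0 < sqrt 2 ^ m * P" using less unfolding P_def by linarith
  then have "0 < P" by (simp add: zero_less_mult_iff)
  have "norm (Lpow L k xs) \<le> R / P * hat_norm L"
    if k: "k 0 = k0" "(\<Sum>i<2. k i) = m" and xs: "\<forall>i<2. norm (xs i) \<le> 1" for k xs
  proof -
    define c where "c i = (if i = 0 then \<alpha> else \<beta>)" for i :: nat
    have k01: "k 0 + k 1 = m" using k(2) by (simp add: numeral_2_eq_2)
    have "(\<Prod>j<m. c (block_idx k j)) = (\<Prod>j<m. if j < k0 then \<alpha> else \<beta>)"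
      by (rule prod.cong) (auto simp: block_idx_two[OF k01] c_def k(1))
    then have "(\<Prod>j<m. c (block_idx k j)) = P" using k0 by (simp add: prod_split_at P_def)
    moreover have "sqrt (\<Sum>i<2. (c i)\<^sup>2) ^ m = R" by (simp add: c_def R_def numeral_2_eq_2)
    moreover have "\<forall>i<2. 0 \<le> c i" using ab by (simp add: c_def)
    then have "(\<Prod>j<m. c (block_idx k j)) * norm (Lpow L k xs) \<le> hat_norm L * sqrt (\<Sum>i<2. (c i)\<^sup>2) ^ m"
      using odd_pos[OF odd] by (intro Lpow_weighted_bound[OF ml ms mc _ _ k(2) xs]) auto
    ultimately have "P * norm (Lpow L k xs) \<le> hat_norm L * R" by simp
    then show ?thesis using \<open>0 < P\<close> by (simp add: field_simps)
  qed
  moreover have "R / P < sqrt 2 ^ m" using less \<open>0 < P\<close> by (simp add: R_def P_def divide_less_eq)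
  ultimately show ?thesis by blast
qed


lemma norm_n_bounds:
  assumes n: "n \<ge> 1"
    and C: "\<And>k xs. (\<Sum>i<n. k i) = m \<Longrightarrow> \<forall>i<n. norm (xs i) \<le> 1 \<Longrightarrow> norm (Lpow L k xs) \<le> C"
  shows "0 \<le> norm_n m n L" "norm_n m n L \<le> C"
proof -
  define P where "P = {(k, xs). (\<Sum>i<n. k i) = m \<and> (\<forall>i<n. norm (xs i :: 'a::real_normed_vector) \<le> 1)}"
  have p0: "(\<lambda>i. if i = 0 then m else 0, \<lambda>_. 0) \<in> P" using n by (simp add: P_def)
  have bound: "\<forall>p\<in>P. norm (Lpow L (fst p) (snd p)) \<le> C" using C by (auto simp: P_def)
  show "norm_n m n L \<le> C"
    unfolding norm_n_def P_def[symmetric] using p0 bound by (intro cSUP_least) auto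
  have "norm (Lpow L (fst p) (snd p)) \<le> norm_n m n L" if "p \<in> P" for p
    unfolding norm_n_def P_def[symmetric] using that bound by (intro cSUP_upper) (auto simp: bdd_above_def)
  then show "0 \<le> norm_n m n L" using p0 by (meson norm_ge_zero order_trans)
qed

lemma norm_n_le_sqrt:
  assumes ml: "mlinear m L" and ms: "msymmetric m L" and mc: "mcontinuous m L"
    and m: "m \<ge> 1" and n: "n \<ge> 1"
  shows "0 \<le> norm_n m n L" "norm_n m n L \<le> sqrt (real n) ^ m * hat_norm L"
proof -
  have "norm (Lpow L k xs) \<le> sqrt (real n) ^ m * hat_norm L"
    if "(\<Sum>i<n. k i) = m" "\<forall>i<n. norm (xs i) \<le> 1" for k xs
    using Lpow_weighted_bound[OF ml ms mc m n that, of "\<lambda>_. 1"] by (simp add: mult.commute)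
  then show "0 \<le> norm_n m n L" "norm_n m n L \<le> sqrt (real n) ^ m * hat_norm L"
    using norm_n_bounds[OF n] by blast+
qed

text \<open>Taking the largest of the finitely many constants for k0 = 0, ..., m.\<close>

lemma norm_n_two_odd:
  assumes ml: "mlinear m L" and ms: "msymmetric m L" and mc: "mcontinuous m L"
    and odd: "odd m"
  obtains C where "C < sqrt 2 ^ m" "0 \<le> norm_n m 2 L" "norm_n m 2 L \<le> C * hat_norm L"
proof -
  have "\<forall>k0\<in>{..m}. \<exists>C. C < sqrt 2 ^ m \<and> (\<forall>k xs. k 0 = k0 \<longrightarrow> (\<Sum>i<2. k i) = m
      \<longrightarrow> (\<forall>i<2. norm (xs i) \<le> 1) \<longrightarrow> norm (Lpow L k xs) \<le> C * hat_norm L)"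
    using Lpow_two_odd_bound[OF ml ms mc odd] by blast
  from bchoice[OF this] obtain Cf where Cf: "\<forall>k0\<in>{..m}. Cf k0 < sqrt 2 ^ m \<and> (\<forall>k xs. k 0 = k0 \<longrightarrow> (\<Sum>i<2. k i) = m
      \<longrightarrow> (\<forall>i<2. norm (xs i) \<le> 1) \<longrightarrow> norm (Lpow L k xs) \<le> Cf k0 * hat_norm L)"
    by blast
  define C where "C = Max (Cf ` {..m})"
  have "C < sqrt 2 ^ m" unfolding C_def using Cf by (subst Max_less_iff) auto
  moreover have bound: "norm (Lpow L k xs) \<le> C * hat_norm L"
    if k: "(\<Sum>i<2. k i) = m" and xs: "\<forall>i<2. norm (xs i) \<le> 1" for k xs
  proof -
    have k0: "k 0 \<le> m" using k by (simp add: numeral_2_eq_2)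
    have "0 \<le> hat_norm L" using hat_norm_nonneg[OF ml mc] odd_pos[OF odd] by simp
    then have "Cf (k 0) * hat_norm L \<le> C * hat_norm L"
      using k0 by (intro mult_right_mono) (auto simp: C_def)
    moreover have "norm (Lpow L k xs) \<le> Cf (k 0) * hat_norm L" using Cf k0 k xs by auto
    ultimately show ?thesis by linarith
  qed
  moreover have "0 \<le> norm_n m 2 L" "norm_n m 2 L \<le> C * hat_norm L"
    using norm_n_bounds[of 2 m L "C * hat_norm L"] bound by auto
  ultimately show thesis using that by blast
qed

lemma pow_powr_inverse:
  fixes x :: real
  assumes "0 \<le> x" "m \<ge> 1"
  shows "(x ^ m) powr (1 / real m) = x"
proof (cases "x = 0")
  case False
  then have "(x ^ m) powr (1 / real m) = x powr (real m * (1 / real m))"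
    using assms by (simp add: powr_realpow[symmetric] powr_powr)
  then show ?thesis using assms False by simp
qed (use assms in simp)

lemma root_ratio_le:
  fixes N H b :: real
  assumes "0 \<le> N" "0 < H" "N \<le> b ^ m * H" "0 \<le> b" "m \<ge> 1"
  shows "(N / H) powr (1 / real m) \<le> b"
proof -
  have "(N / H) powr (1 / real m) \<le> (b ^ m) powr (1 / real m)"
    using assms by (intro powr_mono2) (auto simp: field_simps)
  also have "\<dots> = b" using assms by (simp add: pow_powr_inverse)
  finally show ?thesis .
qed

lemma root_ratio_less:
  fixes N H b C :: real
  assumes "0 \<le> N" "0 < H" "N \<le> C * H" "C < b ^ m" "0 \<le> b" "m \<ge> 1"
  shows "(N / H) powr (1 / real m) < b"
proof -
  have "C * H < b ^ m * H" using assms by (simp add: mult_strict_right_mono)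
  then have "N < b ^ m * H" using assms(3) by linarith
  then have "N / H < b ^ m" using assms(2) by (simp add: divide_less_eq)
  then have "(N / H) powr (1 / real m) < (b ^ m) powr (1 / real m)"
    using assms by (intro powr_less_mono2) auto
  also have "\<dots> = b" using assms by (simp add: pow_powr_inverse)
  finally show ?thesis .
qed


theorem mainTheorem2:
  fixes L :: "(nat \<Rightarrow> 'a::real_normed_vector) \<Rightarrow> 'b::real_normed_vector"
    and m n :: nat
  assumes "m \<ge> 1" and "n \<ge> 2"
    and "mlinear m L" and "msymmetric m L" and "mcontinuous m L"
    and "hatp L \<noteq> (\<lambda>_. 0)"
  shows "(norm_n m n L / hat_norm L) powr (1 / real m) \<le> sqrt (real n)
       \<and> ((n = 2 \<and> odd m) \<longrightarrow> (norm_n m 2 L / hat_norm L) powr (1 / real m) < sqrt 2)"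
proof
  have H: "0 < hat_norm L" using hat_norm_pos assms(1,3,5,6) by blast
  show "(norm_n m n L / hat_norm L) powr (1 / real m) \<le> sqrt (real n)"
    using norm_n_le_sqrt[OF assms(3-5,1)] assms(1,2)
    by (intro root_ratio_le[OF _ H]) auto
  show "(n = 2 \<and> odd m) \<longrightarrow> (norm_n m 2 L / hat_norm L) powr (1 / real m) < sqrt 2"
  proof
    assume "n = 2 \<and> odd m"
    then obtain C where "C < sqrt 2 ^ m" "0 \<le> norm_n m 2 L" "norm_n m 2 L \<le> C * hat_norm L"
      using norm_n_two_odd[OF assms(3-5)] by blast
    then show "(norm_n m 2 L / hat_norm L) powr (1 / real m) < sqrt 2"
      using root_ratio_less[OF _ H] assms(1) by simp
  qed
qed

end
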